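(* There is no deal and legal game that is a tranca mínima (as defined in the context) in which the winning team obtains $108$ points.
   Context: Domino tiles: the set of tiles consists of the 28 unordered pairs $[a,b]=[b,a]$ with $a,b\in\{0,1,\dots,6\}$; the number of points (pips) of $[a,b]$ is $a+b$. Four players, numbered 1 to 4, play; players 1 and 3 form one team and players 2 and 4 the other. The 28 tiles are dealt, 7 to each player (the initial hands). Players take turns in cyclic order $1,2,3,4,1,\dots$. The starting player places any one of their tiles on the table, forming a line of tiles (the board) with two open ends. On each subsequent turn, the player whose turn it is must, if they hold a tile containing a number equal to the number shown at one of the two open ends, place such a tile at that end (with equal numbers adjacent), the other number of the tile becoming the new open end; if they hold no such tile, they pass. A game ends either when a player places their last tile, or in a tranca (blocked game): a position in which no player holds a tile that can be placed. In a game ending in a tranca, the team whose two players' remaining tiles have the smaller total number of pips wins, and it obtains as points the total number of pips on the tiles remaining in the hands of the two players of the other (losing) team. A tranca mínima is a game ending in a tranca in which the total number of pips on the tiles of the board at the end of the game is $42$. *)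

theory Defs
  imports Main
begin

text \<open>A tile [a,b] is represented in normal form (a,b) with a \<le> b \<le> 6.
  Tiles lying on the board are oriented pairs (x,y): x is the number facing
  left, y the number facing right; adjacent tiles on the board have equal
  facing numbers.  Players are 1,2,3,4; teams are {1,3} and {2,4}.\<close>

type_synonym tile = "nat \<times> nat"
type_synonym hands = "nat \<Rightarrow> tile set"
type_synonym board = "(nat \<times> nat) list"
type_synonym state = "hands \<times> board"

definition all_tiles :: "tile set" where
  "all_tiles = {(a, b). a \<le> b \<and> b \<le> 6}"

definition players :: "nat set" where
  "players = {1, 2, 3, 4}"

definition pips :: "nat \<times> nat \<Rightarrow> nat" where
  "pips t = fst t + snd t"

definition is_deal :: "hands \<Rightarrow> bool" where
  "is_deal H \<longleftrightarrow>
     (\<forall>p\<in>players. H p \<subseteq> all_tiles \<and> card (H p) = 7) \<and>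
     (\<forall>p\<in>players. \<forall>q\<in>players. p \<noteq> q \<longrightarrow> H p \<inter> H q = {}) \<and>
     (\<Union>p\<in>players. H p) = all_tiles"

definition left_end :: "board \<Rightarrow> nat" where
  "left_end B = fst (hd B)"

definition right_end :: "board \<Rightarrow> nat" where
  "right_end B = snd (last B)"

definition fits :: "tile \<Rightarrow> board \<Rightarrow> bool" where
  "fits t B \<longleftrightarrow> B \<noteq> [] \<and>
     (left_end B \<in> {fst t, snd t} \<or> right_end B \<in> {fst t, snd t})"

definition can_play :: "state \<Rightarrow> nat \<Rightarrow> bool" where
  "can_play s p \<longleftrightarrow> (\<exists>t\<in>fst s p. fits t (snd s))"

definition attach :: "tile \<Rightarrow> board \<Rightarrow> board \<Rightarrow> bool" where
  "attach t B B' \<longleftrightarrow>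
     (snd t = left_end B \<and> B' = t # B) \<or>
     (fst t = left_end B \<and> B' = (snd t, fst t) # B) \<or>
     (fst t = right_end B \<and> B' = B @ [t]) \<or>
     (snd t = right_end B \<and> B' = B @ [(snd t, fst t)])"

definition turn :: "nat \<Rightarrow> state \<Rightarrow> state \<Rightarrow> bool" where
  "turn p s s' \<longleftrightarrow>
     (let H = fst s; B = snd s in
      if B = [] then
        (\<exists>t\<in>H p. fst s' = H(p := H p - {t}) \<and>
                  (snd s' = [t] \<or> snd s' = [(snd t, fst t)]))
      else if can_play s p then
        (\<exists>t\<in>H p. fits t B \<and> fst s' = H(p := H p - {t}) \<and> attach t B (snd s'))
      else s' = s)"

text \<open>Player whose turn is the k-th turn (k = 0 is the opening move): 1,2,3,4,1,...\<close>
definition player_of_turn :: "nat \<Rightarrow> nat" where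
  "player_of_turn k = k mod 4 + 1"

definition blocked :: "state \<Rightarrow> bool" where
  "blocked s \<longleftrightarrow> (\<forall>p\<in>players. \<not> can_play s p)"

definition game_over :: "state \<Rightarrow> bool" where
  "game_over s \<longleftrightarrow> snd s \<noteq> [] \<and> ((\<exists>p\<in>players. fst s p = {}) \<or> blocked s)"

definition legal_game :: "state list \<Rightarrow> bool" where
  "legal_game ss \<longleftrightarrow> ss \<noteq> [] \<and>
     is_deal (fst (ss ! 0)) \<and> snd (ss ! 0) = [] \<and>
     (\<forall>k. Suc k < length ss \<longrightarrow> turn (player_of_turn k) (ss ! k) (ss ! Suc k)) \<and>
     (\<forall>k. Suc k < length ss \<longrightarrow> \<not> game_over (ss ! k)) \<and>
     game_over (last ss)"

definition ends_in_tranca :: "state list \<Rightarrow> bool" where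
  "ends_in_tranca ss \<longleftrightarrow> blocked (last ss) \<and> (\<forall>p\<in>players. fst (last ss) p \<noteq> {})"

definition hand_pips :: "state \<Rightarrow> nat \<Rightarrow> nat" where
  "hand_pips s p = (\<Sum>t\<in>fst s p. pips t)"

definition board_pips :: "state \<Rightarrow> nat" where
  "board_pips s = (\<Sum>t\<leftarrow>snd s. pips t)"

definition team13_pips :: "state \<Rightarrow> nat" where
  "team13_pips s = hand_pips s 1 + hand_pips s 3"

definition team24_pips :: "state \<Rightarrow> nat" where
  "team24_pips s = hand_pips s 2 + hand_pips s 4"

definition winner_obtains :: "state \<Rightarrow> nat \<Rightarrow> bool" where
  "winner_obtains s n \<longleftrightarrow>
     (team13_pips s < team24_pips s \<and> team24_pips s = n) \<or>
     (team24_pips s < team13_pips s \<and> team13_pips s = n)"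

definition tranca_minima :: "state list \<Rightarrow> bool" where
  "tranca_minima ss \<longleftrightarrow> legal_game ss \<and> ends_in_tranca ss \<and> board_pips (last ss) = 42"

end

theory Submission
  imports Defs
begin

text \<open>At the end of a tranca minima both open ends are blanks, so all seven blanks lie on
  the board; counting pips, the other three board tiles match the numbers \<open>1..6\<close> in pairs.
  The 126 remaining pips would split as 18 for the winners and 108 for the losers.  With 18 pips
  the winners keep at most five tiles, and five only as \<open>[1,1], [1,2], [1,3], [2,2]\<close> with
  \<open>[1,4]\<close> or \<open>[2,3]\<close>.  So the losers keep at least 13 of their 14 tiles and moved at most
  once.  Every number on the board was an open end at some turn, and since the teams alternate,
  away from the losers' move these ends were passed on by a loser, whose final hand therefore
  misses them.  Hence all numbers \<open>1..6\<close> except those of a single board tile are missing from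
  one of the two losing hands, which counting rules out for hands of 7 and 6 tiles without
  blanks; without any losing move, 7 and 7 tiles are ruled out in the same way.\<close>

section \<open>Tiles\<close>

definition nums :: "nat \<times> nat \<Rightarrow> nat set" where
  "nums t = {fst t, snd t}"

definition norm_tile :: "nat \<times> nat \<Rightarrow> tile" where
  "norm_tile t = (min (fst t) (snd t), max (fst t) (snd t))"

definition occurrences :: "nat \<Rightarrow> nat \<times> nat \<Rightarrow> nat" where
  "occurrences x t = (if fst t = x then 1 else 0) + (if snd t = x then 1 else 0)"

abbreviation board_tiles :: "board \<Rightarrow> tile set" where
  "board_tiles B \<equiv> norm_tile ` set B"

lemma nums_Pair [simp]: "nums (a, b) = {a, b}"
  by (simp add: nums_def)

lemma nums_norm_tile [simp]: "nums (norm_tile t) = nums t"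
  by (auto simp: nums_def norm_tile_def min_def max_def)

lemma norm_tile_swap: "norm_tile (b, a) = norm_tile (a, b)"
  by (simp add: norm_tile_def min.commute max.commute)

lemma norm_tile_eq_iff: "norm_tile (a, b) = norm_tile (c, d) \<longleftrightarrow> {a, b} = {c, d}"
  by (auto simp: norm_tile_def min_def max_def doubleton_eq_iff split: if_splits)

lemma norm_tile_double_iff: "fst (norm_tile (a, b)) = snd (norm_tile (a, b)) \<longleftrightarrow> a = b"
  by (auto simp: norm_tile_def min_def max_def)

lemma fst_norm_tile_eq_0_iff: "fst (norm_tile (a, b)) = 0 \<longleftrightarrow> a = 0 \<or> b = 0"
  by (auto simp: norm_tile_def min_def)

lemma norm_tile_in_all_tiles: "a \<le> 6 \<Longrightarrow> b \<le> 6 \<Longrightarrow> norm_tile (a, b) \<in> all_tiles"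
  by (auto simp: norm_tile_def all_tiles_def)

lemma norm_tile_all_tiles: "t \<in> all_tiles \<Longrightarrow> norm_tile t = t"
  by (cases t) (auto simp: norm_tile_def all_tiles_def)

lemma occurrences_norm_tile [simp]: "occurrences x (norm_tile t) = occurrences x t"
  by (auto simp: occurrences_def norm_tile_def min_def max_def)

lemma pips_norm_tile [simp]: "pips (norm_tile t) = pips t"
  by (auto simp: pips_def norm_tile_def min_def max_def)

lemma occurrences_eq_0_iff: "occurrences x t = 0 \<longleftrightarrow> x \<notin> nums t"
  by (auto simp: occurrences_def nums_def)

lemma all_tiles_explicit:
  "all_tiles = {(0,0),(0,1),(0,2),(0,3),(0,4),(0,5),(0,6),
    (1,1),(1,2),(1,3),(1,4),(1,5),(1,6),(2,2),(2,3),(2,4),(2,5),(2,6),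
    (3,3),(3,4),(3,5),(3,6),(4,4),(4,5),(4,6),(5,5),(5,6),(6,6)}"
  (is "_ = ?R")
proof
  show "?R \<subseteq> all_tiles" by (simp add: all_tiles_def)
  show "all_tiles \<subseteq> ?R"
  proof
    fix t assume "t \<in> all_tiles"
    then obtain a b where t: "t = (a, b)" "a \<le> b" "b \<le> (6::nat)" by (auto simp: all_tiles_def)
    then have "b = 0 \<or> b = 1 \<or> b = 2 \<or> b = 3 \<or> b = 4 \<or> b = 5 \<or> b = 6"
      and "a = 0 \<or> a = 1 \<or> a = 2 \<or> a = 3 \<or> a = 4 \<or> a = 5 \<or> a = 6" by linarith+
    then show "t \<in> ?R" using t by (elim disjE) simp_all
  qed
qed

lemma finite_all_tiles: "finite all_tiles"
  by (simp add: all_tiles_explicit)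

lemma card_all_tiles: "card all_tiles = 28"
  by (simp add: all_tiles_explicit)

lemma sum_pips_all_tiles: "(\<Sum>t\<in>all_tiles. pips t) = 168"
  by (simp add: all_tiles_explicit pips_def)

lemma sum_occurrences_all_tiles: "x \<le> 6 \<Longrightarrow> (\<Sum>t\<in>all_tiles. occurrences x t) = 8"
proof -
  assume "x \<le> 6"
  then have "x = 0 \<or> x = 1 \<or> x = 2 \<or> x = 3 \<or> x = 4 \<or> x = 5 \<or> x = 6" by linarith
  then show ?thesis by (elim disjE) (simp_all add: all_tiles_explicit occurrences_def)
qed

section \<open>Boards\<close>

fun chain :: "board \<Rightarrow> bool" where
  "chain [] = True"
| "chain [x] = True"
| "chain (x # y # r) \<longleftrightarrow> snd x = fst y \<and> chain (y # r)"

fun joints :: "board \<Rightarrow> nat list" where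
  "joints [] = []"
| "joints [x] = []"
| "joints (x # y # r) = snd x # joints (y # r)"

lemma chain_Cons: "chain (t # B) \<longleftrightarrow> chain B \<and> (B \<noteq> [] \<longrightarrow> snd t = fst (hd B))"
  by (cases B) auto

lemma chain_snoc: "chain (B @ [t]) \<longleftrightarrow> chain B \<and> (B \<noteq> [] \<longrightarrow> snd (last B) = fst t)"
  by (induction B rule: chain.induct) auto

lemma length_joints: "B \<noteq> [] \<Longrightarrow> length (joints B) + 1 = length B"
  by (induction B rule: joints.induct) auto

lemma set_joints_subset: "set (joints B) \<subseteq> snd ` set B"
  by (induction B rule: joints.induct) auto

lemma sum_list_occurrences_chain:
  "chain B \<Longrightarrow> B \<noteq> [] \<Longrightarrow> (\<Sum>e\<leftarrow>B. occurrences x e) =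
     (if left_end B = x then 1 else 0) + (if right_end B = x then 1 else 0) + 2 * count_list (joints B) x"
  by (induction B rule: joints.induct) (auto simp: occurrences_def left_end_def right_end_def)

lemma sum_list_pips_chain:
  "chain B \<Longrightarrow> B \<noteq> [] \<Longrightarrow> (\<Sum>e\<leftarrow>B. pips e) = left_end B + right_end B + 2 * sum_list (joints B)"
  by (induction B rule: joints.induct) (auto simp: pips_def left_end_def right_end_def)

lemma sum_board_tiles:
  assumes "distinct (map norm_tile B)" and "\<And>e. f (norm_tile e) = f e"
  shows "(\<Sum>t\<in>board_tiles B. f t) = (\<Sum>e\<leftarrow>B. f e)"
proof -
  have "(\<Sum>t\<in>board_tiles B. f t) = (\<Sum>e\<leftarrow>map norm_tile B. f e)"
    using sum_list_distinct_conv_sum_set[OF assms(1), of f] by simp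
  also have "\<dots> = (\<Sum>e\<leftarrow>B. f e)"
    using assms(2) by (simp add: comp_def)
  finally show ?thesis .
qed

section \<open>Consistent positions and moves\<close>

definition consistent :: "state \<Rightarrow> bool" where
  "consistent s \<longleftrightarrow> (\<forall>p\<in>players. fst s p \<subseteq> all_tiles) \<and>
     (\<forall>p\<in>players. \<forall>q\<in>players. p \<noteq> q \<longrightarrow> fst s p \<inter> fst s q = {}) \<and>
     (\<Union>p\<in>players. fst s p) \<union> board_tiles (snd s) = all_tiles \<and>
     (\<forall>p\<in>players. fst s p \<inter> board_tiles (snd s) = {}) \<and>
     distinct (map norm_tile (snd s)) \<and> chain (snd s)"

lemma consistent_deal: "is_deal H \<Longrightarrow> consistent (H, [])"
  unfolding consistent_def is_deal_def by auto

text \<open>\<open>t'\<close> is the tile \<open>t\<close> in the orientation in which it is placed on the board.\<close>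

definition moves :: "state \<Rightarrow> nat \<Rightarrow> tile \<Rightarrow> nat \<times> nat \<Rightarrow> state \<Rightarrow> bool" where
  "moves s p t t' s' \<longleftrightarrow> t \<in> fst s p \<and> norm_tile t' = norm_tile t \<and>
     fst s' = (fst s)(p := fst s p - {t}) \<and>
     ((snd s = [] \<and> snd s' = [t']) \<or>
      (snd s \<noteq> [] \<and> snd t' = left_end (snd s) \<and> snd s' = t' # snd s) \<or>
      (snd s \<noteq> [] \<and> fst t' = right_end (snd s) \<and> snd s' = snd s @ [t']))"

lemma turn_cases:
  assumes "turn p s s'"
  obtains "s' = s" "snd s \<noteq> []" "\<not> can_play s p" | t t' where "moves s p t t' s'"
proof -
  obtain H B where s: "s = (H, B)" by (cases s)
  consider (first) t where "B = []" "t \<in> H p" "fst s' = H(p := H p - {t})"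
      "snd s' = [t] \<or> snd s' = [(snd t, fst t)]"
    | (attach) t where "B \<noteq> []" "t \<in> H p" "fst s' = H(p := H p - {t})" "attach t B (snd s')"
    | (pass) "B \<noteq> []" "\<not> can_play s p" "s' = s"
    using assms s by (auto simp: turn_def Let_def split: if_splits)
  then show thesis
  proof cases
    case (first t)
    then show thesis
      using that(2)[of t t] that(2)[of t "(snd t, fst t)"] s
      by (auto simp: moves_def norm_tile_swap)
  next
    case (attach t)
    then show thesis
      using that(2)[of t t] that(2)[of t "(snd t, fst t)"] s
      by (auto simp: moves_def attach_def norm_tile_swap)
  next
    case pass
    then show thesis using that(1) s by simp
  qed
qed

lemma consistent_moves:
  assumes "consistent s" "p \<in> players" "moves s p t t' s'"
  shows "consistent s'"
proof -
  obtain H B where s: "s = (H, B)" by (cases s)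
  obtain H' B' where s': "s' = (H', B')" by (cases s')
  have tH: "t \<in> H p" and nt: "norm_tile t' = norm_tile t" and H': "H' = H(p := H p - {t})"
    using assms(3) s s' by (auto simp: moves_def)
  have inv: "\<forall>p\<in>players. H p \<subseteq> all_tiles"
     "\<forall>p\<in>players. \<forall>q\<in>players. p \<noteq> q \<longrightarrow> H p \<inter> H q = {}"
     "(\<Union>p\<in>players. H p) \<union> board_tiles B = all_tiles"
     "\<forall>p\<in>players. H p \<inter> board_tiles B = {}"
     "distinct (map norm_tile B)" "chain B"
    using assms(1) s by (auto simp: consistent_def)
  have "t \<in> all_tiles" using inv(1) assms(2) tH by auto
  then have ntt: "norm_tile t' = t" using nt norm_tile_all_tiles by simp
  have tnB: "t \<notin> board_tiles B" using inv(4) assms(2) tH by blast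
  have tother: "\<And>q. q \<in> players \<Longrightarrow> q \<noteq> p \<Longrightarrow> t \<notin> H q" using inv(2) assms(2) tH by blast
  have B': "board_tiles B' = insert t (board_tiles B)" "distinct (map norm_tile B')" "chain B'"
    using assms(3) s s' ntt tnB inv(5,6) unfolding moves_def
    by (auto simp: chain_Cons chain_snoc left_end_def right_end_def)
  have "(\<Union>p\<in>players. H' p) \<union> board_tiles B' = (\<Union>p\<in>players. H p) \<union> board_tiles B"
    using H' B'(1) tH assms(2) by (auto split: if_splits)
  moreover have "\<forall>q\<in>players. H' q \<inter> board_tiles B' = {}"
    using inv(4) H' B'(1) tother by auto
  moreover have "\<forall>p\<in>players. \<forall>q\<in>players. p \<noteq> q \<longrightarrow> H' p \<inter> H' q = {}"
    using inv(2) H' by auto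
  moreover have "\<forall>p\<in>players. H' p \<subseteq> all_tiles"
    using inv(1) H' by auto
  ultimately show ?thesis
    using inv(3) B'(2,3) unfolding consistent_def s' by simp
qed

lemma moves_board: "moves s p t t' s' \<Longrightarrow> set (snd s') = insert t' (set (snd s))"
  by (auto simp: moves_def)

lemma moves_hand: "moves s p t t' s' \<Longrightarrow> fst s' q \<subseteq> fst s q"
  by (auto simp: moves_def)

lemma player_of_turn_in_players: "player_of_turn k \<in> players"
proof -
  have "k mod 4 = 0 \<or> k mod 4 = 1 \<or> k mod 4 = 2 \<or> k mod 4 = 3" by linarith
  then show ?thesis by (auto simp: player_of_turn_def players_def)
qed

definition moved :: "state list \<Rightarrow> nat \<Rightarrow> bool" where
  "moved ss k \<longleftrightarrow> snd (ss ! Suc k) \<noteq> snd (ss ! k)"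

lemma game_step_cases:
  assumes "legal_game ss" "Suc k < length ss"
  obtains (pass) "\<not> moved ss k" "ss ! Suc k = ss ! k" "snd (ss ! k) \<noteq> []"
      "\<not> can_play (ss ! k) (player_of_turn k)"
    | (move) t t' where "moved ss k" "moves (ss ! k) (player_of_turn k) t t' (ss ! Suc k)"
proof -
  have "turn (player_of_turn k) (ss ! k) (ss ! Suc k)"
    using assms by (simp add: legal_game_def)
  then show thesis
  proof (cases rule: turn_cases)
    case 1
    then show thesis using pass by (simp add: moved_def)
  next
    case (2 t t')
    then have "moved ss k" by (auto simp: moves_def moved_def)
    then show thesis using move 2 by blast
  qed
qed

lemma game_consistent:
  assumes "legal_game ss" "k < length ss"
  shows "consistent (ss ! k)"
  using assms(2)
proof (induction k)
  case 0
  have "ss ! 0 = (fst (ss ! 0), [])" using assms(1) by (simp add: legal_game_def prod_eq_iff)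
  then show ?case using consistent_deal assms(1) by (metis legal_game_def)
next
  case (Suc k)
  then have "consistent (ss ! k)" by simp
  with assms(1) Suc.prems show ?case
    by (cases rule: game_step_cases) (auto intro: consistent_moves player_of_turn_in_players)
qed

lemma game_step_mono:
  assumes "legal_game ss" "Suc k < length ss"
  shows "fst (ss ! Suc k) p \<subseteq> fst (ss ! k) p" "set (snd (ss ! k)) \<subseteq> set (snd (ss ! Suc k))"
  using assms by (cases rule: game_step_cases; use moves_hand moves_board in auto)+

lemma game_hand_antimono:
  assumes "legal_game ss" "k \<le> m" "m < length ss"
  shows "fst (ss ! m) p \<subseteq> fst (ss ! k) p"
  using assms(2,3)
  by (induction m rule: dec_induct) (use game_step_mono(1)[OF assms(1)] in fastforce)+

lemma game_board_mono:
  assumes "legal_game ss" "k \<le> m" "m < length ss"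
  shows "set (snd (ss ! k)) \<subseteq> set (snd (ss ! m))"
  using assms(2,3)
  by (induction m rule: dec_induct) (use game_step_mono(2)[OF assms(1)] in fastforce)+

lemma game_board_nonempty:
  assumes "legal_game ss" "0 < j" "j < length ss"
  shows "snd (ss ! j) \<noteq> []"
proof -
  have "snd (ss ! 0) = []" using assms(1) by (simp add: legal_game_def)
  moreover have "Suc 0 < length ss" using assms by simp
  ultimately have "snd (ss ! 1) \<noteq> []"
    by (cases rule: game_step_cases[OF assms(1), where k = 0]) (auto simp: moves_def)
  then show ?thesis
    using game_board_mono[OF assms(1), of 1 j] assms by auto
qed

section \<open>The final board of a tranca minima\<close>

lemma norm_tile_in_all_tilesD: "norm_tile e \<in> all_tiles \<Longrightarrow> fst e \<le> 6 \<and> snd e \<le> 6"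
  by (auto simp: all_tiles_def norm_tile_def min_def max_def split: if_splits)

lemma sum_occurrences_full:
  assumes "BT \<subseteq> all_tiles" "x \<le> 6" and full: "\<And>t. t \<in> all_tiles \<Longrightarrow> x \<in> nums t \<Longrightarrow> t \<in> BT"
  shows "(\<Sum>t\<in>BT. occurrences x t) = 8"
proof -
  have "(\<Sum>t\<in>all_tiles - BT. occurrences x t) = 0"
    using full by (intro sum.neutral) (auto simp: occurrences_eq_0_iff)
  moreover have "(\<Sum>t\<in>all_tiles. occurrences x t) =
      (\<Sum>t\<in>BT. occurrences x t) + (\<Sum>t\<in>all_tiles - BT. occurrences x t)"
    using sum.subset_diff[OF assms(1) finite_all_tiles] by (simp add: add.commute)
  ultimately show ?thesis using sum_occurrences_all_tiles[OF assms(2)] by simp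
qed

text \<open>Both ends show the same number \<open>l\<close>, all eight
  occurrences of \<open>l\<close> are on the board, so \<open>l\<close> is a joint three times and every other number
  at least once; half the pip count is then \<open>21 = l + \<Sum>\<^sub>y y\<cdot>#joints(y) \<ge> 3l + 21\<close>, which forces
  \<open>l = 0\<close> and every other number to be a joint exactly once.\<close>

lemma exhausted_board_42:
  assumes chain: "chain B" and ne: "B \<noteq> []" and dist: "distinct (map norm_tile B)"
    and sub: "board_tiles B \<subseteq> all_tiles"
    and exhausted: "\<And>t. t \<in> all_tiles \<Longrightarrow> nums t \<inter> {left_end B, right_end B} \<noteq> {} \<Longrightarrow> t \<in> board_tiles B"
    and pips42: "(\<Sum>e\<leftarrow>B. pips e) = 42"
  shows "card (board_tiles B) = 10" "\<forall>y\<le>6. (0, y) \<in> board_tiles B"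
    "\<forall>y\<in>{1..6}. (\<Sum>t\<in>board_tiles B. occurrences y t) = 2"
proof -
  define l where "l = left_end B"
  define r where "r = right_end B"
  define c where "c = count_list (joints B)"
  have occ: "(\<Sum>t\<in>board_tiles B. occurrences x t) =
      (if l = x then 1 else 0) + (if r = x then 1 else 0) + 2 * c x" for x
    using sum_board_tiles[OF dist, of "occurrences x"] sum_list_occurrences_chain[OF chain ne]
    by (simp add: l_def r_def c_def)
  have "norm_tile (hd B) \<in> all_tiles" "norm_tile (last B) \<in> all_tiles"
    using sub ne by auto
  then have l6: "l \<le> 6" and r6: "r \<le> 6"
    by (auto simp: l_def r_def left_end_def right_end_def dest: norm_tile_in_all_tilesD)
  have occ8: "(\<Sum>t\<in>board_tiles B. occurrences x t) = 8" if "x \<in> {l, r}" for x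
    using that l6 r6 exhausted
    by (intro sum_occurrences_full[OF sub]) (auto simp: l_def r_def)
  have lr: "l = r"
  proof (rule ccontr)
    assume "l \<noteq> r"
    then have "8 = 1 + 2 * c l" using occ[of l] occ8[of l] by simp
    then show False by presburger
  qed
  have cl: "c l = 3"
    using occ[of l] occ8[of l] lr by simp
  have cy: "c y \<ge> 1" if "y \<le> 6" "y \<noteq> l" for y
  proof -
    have "norm_tile (l, y) \<in> board_tiles B"
      using exhausted[of "norm_tile (l, y)"] norm_tile_in_all_tiles[OF l6 that(1)] by (simp add: l_def)
    moreover have "occurrences y (norm_tile (l, y)) = 1"
      using that by (simp only: occurrences_norm_tile) (simp add: occurrences_def)
    ultimately have "1 \<le> (\<Sum>t\<in>board_tiles B. occurrences y t)"
      using member_le_sum[of "norm_tile (l, y)" "board_tiles B" "occurrences y"] by simp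
    then show ?thesis using occ[of y] that lr by simp
  qed
  have joints06: "set (joints B) \<subseteq> {0..6}"
  proof
    fix v assume "v \<in> set (joints B)"
    then obtain e where "e \<in> set B" "v = snd e" using set_joints_subset by blast
    then show "v \<in> {0..6}" using sub norm_tile_in_all_tilesD[of e] by auto
  qed
  have "(\<Sum>e\<leftarrow>B. pips e) = l + r + 2 * (\<Sum>y\<in>{0..6}. c y * y)"
    using sum_list_pips_chain[OF chain ne] sum_list_map_eq_sum_count2[OF joints06, of id]
    by (simp add: l_def r_def c_def)
  then have "l + (c 1 + 2 * c 2 + 3 * c 3 + 4 * c 4 + 5 * c 5 + 6 * c 6) = 21"
    using pips42 lr by (simp add: numeral_eq_Suc)
  moreover have "l = 0 \<or> l = 1 \<or> l = 2 \<or> l = 3 \<or> l = 4 \<or> l = 5 \<or> l = 6" using l6 by linarith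
  ultimately have l0: "l = 0" and cs: "c 1 = 1" "c 2 = 1" "c 3 = 1" "c 4 = 1" "c 5 = 1" "c 6 = 1"
    using cl cy[of 0] cy[of 1] cy[of 2] cy[of 3] cy[of 4] cy[of 5] cy[of 6] by auto
  have "length (joints B) = (\<Sum>y\<in>{0..6}. c y)"
    using sum_count_set[OF joints06] by (simp add: c_def)
  then have "length B = 10"
    using length_joints[OF ne] cs cl l0 by (simp add: numeral_eq_Suc)
  then show "card (board_tiles B) = 10"
    using distinct_card[OF dist] by simp
  show "\<forall>y\<le>6. (0, y) \<in> board_tiles B"
    using exhausted l0 by (auto simp: l_def all_tiles_def)
  show "\<forall>y\<in>{1..6}. (\<Sum>t\<in>board_tiles B. occurrences y t) = 2"
    using occ l0 lr cs by (auto simp: le_Suc_eq numeral_eq_Suc)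
qed

text \<open>\<open>BT\<close>: the tiles on the final board; \<open>W\<close>: the tiles left to the winning team;
  \<open>L\<close>, \<open>L'\<close>: the hands of the two losers.\<close>

locale final_layout =
  fixes BT W L L' :: "tile set"
  assumes board_sub: "BT \<subseteq> all_tiles"
    and zero_tiles: "\<forall>y\<le>6. (0, y) \<in> BT"
    and card_board: "card BT = 10"
    and occurrences_2: "\<forall>y\<in>{1..6}. (\<Sum>t\<in>BT. occurrences y t) = 2"
    and off_board: "W \<union> L \<union> L' = all_tiles - BT"
begin

lemma finite_board: "finite BT"
  using finite_subset[OF board_sub finite_all_tiles] .

lemma partner_unique:
  assumes y: "y \<in> {1..6}" and z: "z1 \<in> {1..6}" "z2 \<in> {1..6}"
    and on_board: "norm_tile (y, z1) \<in> BT" "norm_tile (y, z2) \<in> BT"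
  shows "z1 = z2"
proof (rule ccontr)
  assume ne: "z1 \<noteq> z2"
  let ?T = "{(0, y), norm_tile (y, z1), norm_tile (y, z2)}"
  have "(0, y) \<in> BT" using zero_tiles y by auto
  then have "?T \<subseteq> BT" using on_board by simp
  then have "(\<Sum>t\<in>?T. occurrences y t) \<le> 2"
    using sum_mono2[OF finite_board, of ?T "occurrences y"] occurrences_2 y by simp
  moreover have "(0, y) \<noteq> norm_tile (y, z1)" "(0, y) \<noteq> norm_tile (y, z2)"
    "norm_tile (y, z1) \<noteq> norm_tile (y, z2)"
    using y z ne by (auto simp: norm_tile_def min_def max_def split: if_splits)
  then have "(\<Sum>t\<in>?T. occurrences y t) =
      occurrences y (0, y) + occurrences y (y, z1) + occurrences y (y, z2)"
    by simp
  moreover have "occurrences y (0, y) \<ge> 1" "occurrences y (y, z1) \<ge> 1" "occurrences y (y, z2) \<ge> 1"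
    by (simp_all add: occurrences_def)
  ultimately show False by linarith
qed

lemma partner_exists:
  assumes y: "y \<in> {1..6}"
  obtains z where "z \<in> {1..6}" "z \<noteq> y" "norm_tile (y, z) \<in> BT"
proof -
  have y0: "(0, y) \<in> BT" using zero_tiles y by auto
  have rest: "(\<Sum>t\<in>BT - {(0, y)}. occurrences y t) = 1"
    using sum.remove[OF finite_board y0, of "occurrences y"] occurrences_2 y
    by (simp add: occurrences_def)
  then obtain t where t: "t \<in> BT - {(0, y)}" "occurrences y t \<noteq> 0"
    by (metis one_neq_zero sum.neutral)
  have "occurrences y t \<le> 1"
    using member_le_sum[OF t(1), of "occurrences y"] finite_board rest by simp
  with t have t: "t \<in> BT - {(0, y)}" "occurrences y t = 1" by auto
  obtain a b where ab: "t = (a, b)" "a \<le> b" "b \<le> 6"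
    using t board_sub by (cases t) (auto simp: all_tiles_def)
  define z where "z = (if a = y then b else a)"
  have "y = a \<or> y = b" "z \<noteq> y" using t(2) ab by (auto simp: z_def occurrences_def split: if_splits)
  then have "t = norm_tile (y, z)" "z \<noteq> 0" "z \<le> 6"
    using ab t(1) y by (auto simp: z_def norm_tile_def)
  then show thesis using that[of z] t(1) \<open>z \<noteq> y\<close> by auto
qed

lemma card_nonzero_board: "card {t\<in>BT. fst t \<noteq> 0} = 3"
proof -
  have "{t\<in>BT. fst t = 0} = (\<lambda>y. (0, y)) ` {0..6}"
    using zero_tiles board_sub by (auto simp: all_tiles_def image_iff)
  then have "card {t\<in>BT. fst t = 0} = 7"
    by (simp add: card_image inj_on_def)
  moreover have "card BT = card {t\<in>BT. fst t = 0} + card {t\<in>BT. fst t \<noteq> 0}"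
    using finite_board by (subst card_Un_disjoint[symmetric]) (auto intro: arg_cong[where f = card])
  ultimately show ?thesis using card_board by simp
qed

lemma off_board_nonzero:
  assumes "t \<in> all_tiles - BT"
  shows "fst t \<noteq> 0"
proof
  assume "fst t = 0"
  then have "t = (0, snd t)" "snd t \<le> 6" using assms by (auto simp: all_tiles_def prod_eq_iff)
  then show False using zero_tiles assms by (metis Diff_iff)
qed

lemma hands_off_board: "W \<subseteq> all_tiles - BT" "L \<subseteq> all_tiles - BT" "L' \<subseteq> all_tiles - BT"
  using off_board by auto

end

section \<open>Hands left off the final board\<close>

text \<open>Apart from \<open>[1,1], [1,2], [1,3], [2,2]\<close>, whose shortfalls \<open>5 - pips\<close> add up to 7, every
  tile without a blank has at least 5 pips; so \<open>5 |W| \<le> 18 + 7\<close>.\<close>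

lemma hand_18_pips:
  assumes W: "W \<subseteq> all_tiles" "\<forall>t\<in>W. fst t \<noteq> 0" and pips18: "(\<Sum>t\<in>W. pips t) = 18"
  shows "card W \<le> 5"
    and "card W = 5 \<Longrightarrow> \<exists>x\<in>{(1,4), (2,3)}. W = {(1,1), (1,2), (1,3), (2,2), x}"
proof -
  define small :: "tile set" where "small = {(1,1), (1,2), (1,3), (2,2)}"
  have finW: "finite W" using finite_subset[OF W(1) finite_all_tiles] .
  have short_small: "t \<in> small" if "t \<in> W" "pips t < 5" for t
  proof -
    obtain a b where t: "t = (a, b)" by (cases t)
    then have "0 < a" "a \<le> b" "a + b < 5"
      using that W by (auto simp: all_tiles_def pips_def)
    then have "(a = 1 \<and> (b = 1 \<or> b = 2 \<or> b = 3)) \<or> (a = 2 \<and> b = 2)" by presburger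
    then show ?thesis using t by (auto simp: small_def)
  qed
  have short: "(\<Sum>t\<in>W. 5 - pips t) = (\<Sum>t\<in>W \<inter> small. 5 - pips t)"
    using short_small finW by (intro sum.mono_neutral_right) auto
  also have "\<dots> \<le> (\<Sum>t\<in>small. 5 - pips t)"
    by (intro sum_mono2) (auto simp: small_def)
  also have "\<dots> = 7" by (simp add: small_def pips_def)
  finally have short7: "(\<Sum>t\<in>W. 5 - pips t) \<le> 7" .
  have "5 * card W \<le> (\<Sum>t\<in>W. pips t + (5 - pips t))"
    using sum_mono[of W "\<lambda>_. 5" "\<lambda>t. pips t + (5 - pips t)"] by (simp add: mult.commute)
  then have main: "5 * card W \<le> 18 + (\<Sum>t\<in>W. 5 - pips t)"
    using pips18 by (simp add: sum.distrib)
  then show "card W \<le> 5" using short7 by linarith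
  assume c5: "card W = 5"
  have "small \<subseteq> W"
  proof (rule ccontr)
    assume "\<not> small \<subseteq> W"
    then obtain t0 where t0: "t0 \<in> small" "t0 \<notin> W" by blast
    have "(\<Sum>t\<in>W \<inter> small. 5 - pips t) \<le> (\<Sum>t\<in>small - {t0}. 5 - pips t)"
      using t0 by (intro sum_mono2) (auto simp: small_def)
    also have "\<dots> < 7"
      using t0(1) unfolding small_def by (elim insertE emptyE) (simp_all add: pips_def insert_Diff_if)
    finally show False using main short c5 by linarith
  qed
  moreover have "card (W - small) = 1"
    using c5 card_Diff_subset[OF _ \<open>small \<subseteq> W\<close>] by (simp add: small_def)
  then obtain x where "W - small = {x}" by (rule card_1_singletonE)
  ultimately have x: "W = insert x small" "x \<notin> small" by auto
  have "pips x = 5" using pips18 x finW by (simp add: small_def pips_def)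
  moreover have "x \<in> all_tiles" "fst x \<noteq> 0" using x W by auto
  ultimately have "x \<in> {(1,4), (2,3)}" by (cases x) (auto simp: all_tiles_def pips_def)
  then show "\<exists>x\<in>{(1,4), (2,3)}. W = {(1,1), (1,2), (1,3), (2,2), x}"
    using x by (auto simp: small_def)
qed

lemma card_ordered_pairs_le:
  "finite V \<Longrightarrow> card {p \<in> V \<times> V. fst p \<le> (snd p :: nat)} \<le> card V * (card V + 1) div 2"
proof (induction V rule: finite_induct)
  case empty
  then show ?case by simp
next
  case (insert x V)
  let ?P = "\<lambda>V. {p \<in> V \<times> V. fst p \<le> (snd p :: nat)}"
  let ?new = "(\<lambda>b. if x \<le> b then (x, b) else (b, x)) ` V"
  have "?P (insert x V) \<subseteq> ?P V \<union> {(x, x)} \<union> ?new"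
    by auto
  then have "card (?P (insert x V)) \<le> card (?P V \<union> {(x, x)} \<union> ?new)"
    using insert by (intro card_mono) auto
  also have "\<dots> \<le> card (?P V) + 1 + card V"
    using card_Un_le[of "?P V \<union> {(x, x)}" ?new] card_Un_le[of "?P V" "{(x, x)}"]
      card_image_le[OF insert(1), of "\<lambda>b. if x \<le> b then (x, b) else (b, x)"] by simp
  finally show ?case using insert by simp
qed

definition missing :: "tile set \<Rightarrow> nat set" where
  "missing X = {v\<in>{1..6}. \<forall>t\<in>X. v \<notin> nums t}"

lemma missing_subset: "missing X \<subseteq> {1..6}"
  by (auto simp: missing_def)

lemma finite_missing: "finite (missing X)"
  using finite_subset[OF missing_subset] by simp

lemma missingD: "v \<in> missing X \<Longrightarrow> t \<in> X \<Longrightarrow> v \<notin> nums t"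
  by (auto simp: missing_def)

lemma hand_subset_ordered_pairs:
  assumes "X \<subseteq> all_tiles" "\<forall>t\<in>X. fst t \<noteq> 0"
  shows "X \<subseteq> {p \<in> ({1..6} - missing X) \<times> ({1..6} - missing X). fst p \<le> snd p}"
proof
  fix t assume t: "t \<in> X"
  obtain a b where ab: "t = (a, b)" by (cases t)
  then have "1 \<le> a" "a \<le> b" "b \<le> 6" using t assms by (auto simp: all_tiles_def)
  moreover have "a \<notin> missing X" "b \<notin> missing X" using t ab by (auto dest: missingD)
  ultimately show "t \<in> {p \<in> ({1..6} - missing X) \<times> ({1..6} - missing X). fst p \<le> snd p}"
    using ab by auto
qed

text \<open>\<open>m\<close> numbers form only \<open>m(m+1)/2\<close> tiles.\<close>

lemma card_missing_le:
  assumes "X \<subseteq> all_tiles" "\<forall>t\<in>X. fst t \<noteq> 0" "card X \<in> {6, 7}"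
  shows "card (missing X) \<le> 9 - card X"
proof -
  define m where "m = 6 - card (missing X)"
  have "card ({1..6::nat} - missing X) = m"
    using missing_subset by (simp add: m_def card_Diff_subset finite_missing)
  then have "card X \<le> m * (m + 1) div 2"
    using card_mono[OF _ hand_subset_ordered_pairs[OF assms(1,2)]]
      card_ordered_pairs_le[of "{1..6} - missing X"] by fastforce
  moreover have "card (missing X) = 6 - m"
    using card_mono[OF _ missing_subset, of X] by (simp add: m_def)
  moreover have "m = 0 \<or> m = 1 \<or> m = 2 \<or> m = 3 \<or> m = 4 \<or> m = 5 \<or> m = 6"
    unfolding m_def by linarith
  ultimately show ?thesis
    using assms(3) by (elim disjE) auto
qed

context final_layout
begin

lemma card_missing_le_off_board:
  "X \<subseteq> all_tiles - BT \<Longrightarrow> card X \<in> {6, 7} \<Longrightarrow> card (missing X) \<le> 9 - card X"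
  using card_missing_le[of X] off_board_nonzero by blast

lemma losers_7_7_miss_not_all:
  assumes "card L = 7" "card L' = 7"
  shows "\<not> {1..6} \<subseteq> missing L \<union> missing L'"
proof
  assume "{1..6} \<subseteq> missing L \<union> missing L'"
  then have "card {1..6::nat} \<le> card (missing L \<union> missing L')"
    by (intro card_mono) (auto simp: finite_missing)
  also have "\<dots> \<le> card (missing L) + card (missing L')" by (rule card_Un_le)
  also have "\<dots> \<le> 4"
    using card_missing_le_off_board[of L] card_missing_le_off_board[of L'] hands_off_board assms by simp
  finally show False by simp
qed

lemma final_layout_swap: "final_layout BT W L' L"
  using off_board by unfold_locales (auto simp: board_sub zero_tiles card_board occurrences_2)

lemma no_hand_6_missing_3:
  assumes "card (missing L') = 3" "card L' = 6" "T \<in> BT" "nums T \<subseteq> {1..6} - missing L'"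
  shows False
proof -
  define V where "V = {1..6::nat} - missing L'"
  let ?P = "{p \<in> V \<times> V. fst p \<le> snd p}"
  have "card V = 3" using assms(1) missing_subset by (simp add: V_def card_Diff_subset finite_missing)
  have "L' \<subseteq> ?P - {T}"
    using hand_subset_ordered_pairs[of L'] off_board_nonzero hands_off_board assms(3)
    unfolding V_def by blast
  moreover have "T \<in> ?P"
    using assms(3,4) board_sub by (cases T) (auto simp: V_def all_tiles_def)
  ultimately have "card L' \<le> card ?P - 1"
    using card_mono[of "?P - {T}" L'] by (simp add: V_def)
  also have "\<dots> \<le> 5"
    using card_ordered_pairs_le[of V] \<open>card V = 3\<close> by (simp add: V_def)
  finally show False using assms(2) by simp
qed

end

locale five_winner_tiles = final_layout +
  fixes x :: tile
  assumes winners: "W = {(1,1), (1,2), (1,3), (2,2), x}" and x_cases: "x \<in> {(1,4), (2,3)}"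
begin

lemma winners_non_doubles_meet:
  "t1 \<in> W \<Longrightarrow> t2 \<in> W \<Longrightarrow> fst t1 \<noteq> snd t1 \<Longrightarrow> fst t2 \<noteq> snd t2 \<Longrightarrow> nums t1 \<inter> nums t2 \<noteq> {}"
  using winners x_cases by (auto simp: nums_def)

lemma cross_tile:
  assumes "a \<in> missing L" "a' \<in> missing L'"
  shows "norm_tile (a, a') \<in> W \<union> BT"
proof -
  have "norm_tile (a, a') \<in> all_tiles"
    using assms by (intro norm_tile_in_all_tiles) (auto simp: missing_def)
  moreover have "norm_tile (a, a') \<notin> L" "norm_tile (a, a') \<notin> L'"
    using assms by (auto dest: missingD)
  ultimately show ?thesis using off_board by blast
qed

text \<open>A number missing from both losing hands would have all five of its tiles off the
  board in \<open>W\<close>; but \<open>W\<close> contains both \<open>[1,1]\<close> and \<open>[2,2]\<close>.\<close>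

lemma missing_disjoint: "missing L \<inter> missing L' = {}"
proof (rule ccontr)
  assume "missing L \<inter> missing L' \<noteq> {}"
  then obtain v where v: "v \<in> missing L" "v \<in> missing L'" by blast
  then have v6: "v \<in> {1..6}" by (simp add: missing_def)
  obtain p where p: "p \<in> {1..6}" "p \<noteq> v" "norm_tile (v, p) \<in> BT"
    using partner_exists[OF v6] by blast
  define Z where "Z = {1..6::nat} - {p}"
  have "(\<lambda>z. norm_tile (v, z)) ` Z \<subseteq> W"
  proof
    fix t assume "t \<in> (\<lambda>z. norm_tile (v, z)) ` Z"
    then obtain z where "z \<in> Z" "t = norm_tile (v, z)" by blast
    then have z: "z \<in> {1..6}" "z \<noteq> p" "t = norm_tile (v, z)" by (auto simp: Z_def)
    have "t \<notin> BT" using partner_unique[OF v6 z(1) p(1)] p(3) z by blast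
    moreover have "t \<notin> L" "t \<notin> L'" using v z(3) by (auto dest: missingD)
    moreover have "t \<in> all_tiles" using v6 z by (auto intro: norm_tile_in_all_tiles)
    ultimately show "t \<in> W" using off_board by blast
  qed
  moreover have "inj_on (\<lambda>z. norm_tile (v, z)) Z"
    by (rule inj_onI) (auto simp: norm_tile_eq_iff doubleton_eq_iff)
  then have "card ((\<lambda>z. norm_tile (v, z)) ` Z) = 5"
    using p(1) by (simp add: card_image Z_def)
  moreover have "finite W" "card W = 5" using winners x_cases by auto
  ultimately have W: "(\<lambda>z. norm_tile (v, z)) ` Z = W"
    using card_subset_eq by metis
  have "v \<in> nums t" if t: "t \<in> W" for t
  proof -
    obtain z where "t = norm_tile (v, z)" using t W by blast
    then show ?thesis by simp
  qed
  then have "v \<in> nums (1, 1)" "v \<in> nums (2, 2)" using winners by blast+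
  then show False by simp
qed

lemma five_winner_tiles_swap: "five_winner_tiles BT W L' L x"
  using final_layout_swap winners x_cases by (simp add: five_winner_tiles_def five_winner_tiles_axioms_def)

lemma card_missing_union: "card (missing L \<union> missing L') = card (missing L) + card (missing L')"
  using card_Un_disjoint[OF finite_missing finite_missing missing_disjoint] .

lemma card_unmissed: "card ({1..6} - (missing L \<union> missing L')) = 6 - (card (missing L) + card (missing L'))"
  using missing_subset by (simp add: card_Diff_subset finite_missing card_missing_union)

text \<open>The six tiles pairing a number missing from \<open>L\<close> with one missing from \<open>L'\<close> are
  distinct non-doubles without blank, so they must fit into the three such tiles of \<open>W\<close> and
  the two board tiles of the matching avoiding the remaining number \<open>z\<close>.\<close>

lemma no_missing_2_3:
  assumes A: "card (missing L) = 2" and A': "card (missing L') = 3"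
  shows False
proof -
  let ?A = "missing L" and ?A' = "missing L'"
  have "card ({1..6} - (?A \<union> ?A')) = 1" using card_unmissed A A' by simp
  then obtain z where "{1..6} - (?A \<union> ?A') = {z}" by (rule card_1_singletonE)
  then have z: "z \<in> {1..6}" "z \<notin> ?A" "z \<notin> ?A'" by auto
  obtain pz where pz: "pz \<in> {1..6}" "pz \<noteq> z" "norm_tile (z, pz) \<in> BT"
    using partner_exists[OF z(1)] by blast
  let ?C = "(\<lambda>(a, a'). norm_tile (a, a')) ` (?A \<times> ?A')"
  have "inj_on (\<lambda>(a, a'). norm_tile (a, a')) (?A \<times> ?A')"
    using missing_disjoint by (auto simp: inj_on_def norm_tile_eq_iff doubleton_eq_iff)
  then have C6: "card ?C = 6" using A A' by (simp add: card_image card_cartesian_product)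
  let ?X = "W - {(1,1), (2,2)}" and ?Y = "{t\<in>BT. fst t \<noteq> 0} - {norm_tile (z, pz)}"
  have sub: "?C \<subseteq> ?X \<union> ?Y"
  proof
    fix t assume "t \<in> ?C"
    then obtain a a' where aa: "a \<in> ?A" "a' \<in> ?A'" "t = norm_tile (a, a')" by auto
    then have "a \<noteq> a'" "a \<noteq> 0" "a' \<noteq> 0" "z \<notin> {a, a'}"
      using missing_disjoint z by (auto simp: missing_def)
    then have "fst t \<noteq> snd t" "fst t \<noteq> 0" "t \<noteq> norm_tile (z, pz)"
      using aa(3) by (auto simp: norm_tile_double_iff fst_norm_tile_eq_0_iff norm_tile_eq_iff)
    then show "t \<in> ?X \<union> ?Y"
      using cross_tile[OF aa(1,2)] aa(3) by auto
  qed
  have "card ?X = 3" using winners x_cases by auto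
  moreover have "norm_tile (z, pz) \<in> {t\<in>BT. fst t \<noteq> 0}"
    using pz z(1) fst_norm_tile_eq_0_iff[of z pz] by auto
  then have "card ?Y = 2"
    using card_nonzero_board finite_board by simp
  moreover have "card ?C \<le> card (?X \<union> ?Y)"
    using sub winners finite_board by (intro card_mono) auto
  then have "card ?C \<le> card ?X + card ?Y"
    using card_Un_le[of ?X ?Y] by linarith
  ultimately show False using C6 by simp
qed

lemma cross_tiles_not_both_winners:
  assumes "a \<in> missing L" "c \<in> missing L" "a \<noteq> c" "b \<in> missing L'" "d \<in> missing L'" "b \<noteq> d"
  shows "norm_tile (a, b) \<in> BT \<or> norm_tile (c, d) \<in> BT"
proof (rule ccontr)
  assume "\<not> ?thesis"
  then have "norm_tile (a, b) \<in> W" "norm_tile (c, d) \<in> W" using cross_tile assms by blast+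
  moreover have "a \<noteq> b" "c \<noteq> d" "{a, b} \<inter> {c, d} = {}" using assms missing_disjoint by auto
  ultimately show False
    using winners_non_doubles_meet[of "norm_tile (a, b)" "norm_tile (c, d)"] by (simp add: norm_tile_double_iff)
qed

text \<open>With \<open>missing L = {p, q}\<close> and \<open>missing L' = {r, s}\<close>, the disjoint cross tiles
  \<open>[p,r], [q,s]\<close> cannot both be winners' tiles, nor can \<open>[p,s], [q,r]\<close>; the two that lie on
  the board give some number two partners.\<close>

lemma no_missing_2_2:
  assumes "card (missing L) = 2" "card (missing L') = 2"
  shows False
proof -
  obtain p q where pq: "missing L = {p, q}" "p \<noteq> q" using assms(1) by (auto simp: card_2_iff)
  obtain r s where rs: "missing L' = {r, s}" "r \<noteq> s" using assms(2) by (auto simp: card_2_iff)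
  have "p \<in> {1..6}" "q \<in> {1..6}" "r \<in> {1..6}" "s \<in> {1..6}"
    using pq rs missing_subset by blast+
  note in6 = this
  have swap: "norm_tile (b, a) \<in> BT" if "norm_tile (a, b) \<in> BT" for a b
    using that by (simp add: norm_tile_swap)
  have "norm_tile (p, r) \<in> BT \<or> norm_tile (q, s) \<in> BT"
    using cross_tiles_not_both_winners[of p q r s] pq rs by simp
  moreover have "norm_tile (p, s) \<in> BT \<or> norm_tile (q, r) \<in> BT"
    using cross_tiles_not_both_winners[of p q s r] pq rs by simp
  ultimately show False
  proof (elim disjE)
    assume "norm_tile (p, r) \<in> BT" "norm_tile (p, s) \<in> BT"
    then show False using partner_unique[of p r s] in6 rs(2) by blast
  next
    assume "norm_tile (p, r) \<in> BT" "norm_tile (q, r) \<in> BT"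
    then show False using partner_unique[of r p q] in6 pq(2) swap by blast
  next
    assume "norm_tile (q, s) \<in> BT" "norm_tile (p, s) \<in> BT"
    then show False using partner_unique[of s q p] in6 pq(2) swap by blast
  next
    assume "norm_tile (q, s) \<in> BT" "norm_tile (q, r) \<in> BT"
    then show False using partner_unique[of q s r] in6 rs(2) by blast
  qed
qed

lemma losers_7_6_miss_not_all_but_one_tile:
  assumes "card L = 7" "card L' = 6" "T \<in> BT" and unmissed: "{1..6} - (missing L \<union> missing L') \<subseteq> nums T"
  shows False
proof -
  have A: "card (missing L) \<le> 2" and A': "card (missing L') \<le> 3"
    using card_missing_le_off_board hands_off_board assms(1,2) by fastforce+
  have nums2: "card (nums T) \<le> 2" by (simp add: nums_def card_insert_le_m1)
  then have "6 - (card (missing L) + card (missing L')) \<le> 2"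
    using card_mono[OF _ unmissed] card_unmissed by (simp add: nums_def)
  then consider "card (missing L) = 2" "card (missing L') = 3" | "card (missing L) = 2" "card (missing L') = 2"
    | "card (missing L) = 1" "card (missing L') = 3"
    using A A' by linarith
  then show False
  proof cases
    case 1
    then show False by (rule no_missing_2_3)
  next
    case 2
    then show False by (rule no_missing_2_2)
  next
    case 3
    then have "card ({1..6} - (missing L \<union> missing L')) = 2" using card_unmissed by simp
    then have "{1..6} - (missing L \<union> missing L') = nums T"
      using card_subset_eq[OF _ unmissed] nums2 card_mono[OF _ unmissed] by (simp add: nums_def)
    then have "nums T \<subseteq> {1..6} - missing L'" by blast
    with 3 assms(2,3) show False by (intro no_hand_6_missing_3) auto
  qed
qed

end

section \<open>Open ends during the game\<close>

definition ends :: "state \<Rightarrow> nat set" where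
  "ends s = {left_end (snd s), right_end (snd s)}"

lemma moves_ends_first: "moves s p t t' s' \<Longrightarrow> snd s = [] \<Longrightarrow> ends s' = nums t'"
  by (auto simp: moves_def ends_def nums_def left_end_def right_end_def)

lemma moves_ends:
  assumes "moves s p t t' s'" "snd s \<noteq> []"
  shows "\<exists>x y r. ends s = {y, r} \<and> ends s' = {x, r} \<and> nums t' = {x, y}"
proof -
  from assms consider (left) "snd t' = left_end (snd s)" "snd s' = t' # snd s"
    | (right) "fst t' = right_end (snd s)" "snd s' = snd s @ [t']"
    by (auto simp: moves_def)
  then show ?thesis
  proof cases
    case left
    then show ?thesis using assms(2)
      by (intro exI[of _ "fst t'"] exI[of _ "snd t'"] exI[of _ "right_end (snd s)"])
        (auto simp: ends_def nums_def left_end_def right_end_def)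
  next
    case right
    then show ?thesis using assms(2)
      by (intro exI[of _ "snd t'"] exI[of _ "fst t'"] exI[of _ "left_end (snd s)"])
        (auto simp: ends_def nums_def left_end_def right_end_def)
  qed
qed

lemma moves_ends_subset:
  "moves s p t t' s' \<Longrightarrow> nums t' \<subseteq> ends s' \<union> (if snd s = [] then {} else ends s)"
  using moves_ends[of s p t t' s'] moves_ends_first[of s p t t' s'] by auto

lemma board_values_exposed:
  assumes legal: "legal_game ss" and j: "j < length ss"
    and exposed: "\<And>i. i \<le> j \<Longrightarrow> snd (ss ! i) \<noteq> [] \<Longrightarrow> ends (ss ! i) \<subseteq> C"
  shows "e \<in> set (snd (ss ! j)) \<Longrightarrow> nums e \<subseteq> C"
  using j exposed
proof (induction j arbitrary: e)
  case 0
  then show ?case using legal by (simp add: legal_game_def)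
next
  case (Suc j)
  from legal \<open>Suc j < length ss\<close> show ?case
  proof (cases rule: game_step_cases)
    case pass
    then show ?thesis using Suc by simp
  next
    case (move t t')
    have "snd (ss ! Suc j) \<noteq> []" using moves_board[OF move(2)] by auto
    then have "nums t' \<subseteq> C"
      using moves_ends_subset[OF move(2)] Suc.prems(3)[of j] Suc.prems(3)[of "Suc j"]
      by (auto split: if_splits)
    moreover have "nums e' \<subseteq> C" if "e' \<in> set (snd (ss ! j))" for e'
      using Suc.IH[OF that] Suc.prems by simp
    ultimately show ?thesis using Suc.prems(1) moves_board[OF move(2)] by (metis insert_iff)
  qed
qed

lemma finite_hand: "consistent s \<Longrightarrow> p \<in> players \<Longrightarrow> finite (fst s p)"
  using finite_subset[OF _ finite_all_tiles] by (auto simp: consistent_def)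

text \<open>Every move of a team member removes one tile from the team's hands.\<close>

lemma team_hand_card:
  assumes legal: "legal_game ss" and team: "team \<subseteq> players" and m: "m < length ss"
  shows "card (\<Union>q\<in>team. fst (ss ! m) q) + card {k. k < m \<and> moved ss k \<and> player_of_turn k \<in> team}
      = card (\<Union>q\<in>team. fst (ss ! 0) q)"
  using m
proof (induction m)
  case 0
  then show ?case by simp
next
  case (Suc m)
  let ?U = "\<lambda>i. \<Union>q\<in>team. fst (ss ! i) q"
  let ?K = "\<lambda>i. {k. k < i \<and> moved ss k \<and> player_of_turn k \<in> team}"
  have IH: "card (?U m) + card (?K m) = card (?U 0)" using Suc by simp
  have cons: "consistent (ss ! m)" using game_consistent[OF legal] Suc.prems by simp
  have "finite team" using finite_subset[OF team] by (simp add: players_def)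
  then have finU: "finite (?U m)"
    using finite_hand[OF cons] team by blast
  from legal Suc.prems show ?case
  proof (cases rule: game_step_cases)
    case pass
    then have "?K (Suc m) = ?K m" by (auto simp: less_Suc_eq)
    then show ?thesis using IH pass by simp
  next
    case (move t t')
    let ?p = "player_of_turn m"
    have H': "fst (ss ! Suc m) = (fst (ss ! m))(?p := fst (ss ! m) ?p - {t})" and t: "t \<in> fst (ss ! m) ?p"
      using move(2) by (auto simp: moves_def)
    show ?thesis
    proof (cases "?p \<in> team")
      case True
      have disj: "\<forall>p\<in>players. \<forall>q\<in>players. p \<noteq> q \<longrightarrow> fst (ss ! m) p \<inter> fst (ss ! m) q = {}"
        using cons by (simp add: consistent_def)
      have "t \<notin> fst (ss ! m) q" if "q \<in> team" "q \<noteq> ?p" for q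
        using disj[rule_format, of ?p q] t that team player_of_turn_in_players by blast
      then have "?U (Suc m) = ?U m - {t}" using H' True by auto
      moreover have "t \<in> ?U m" using t True by blast
      moreover have "?K (Suc m) = insert m (?K m)" using move(1) True by (auto simp: less_Suc_eq)
      moreover have "card (insert m (?K m)) = Suc (card (?K m))" by simp
      moreover have "card (?U m - {t}) = card (?U m) - 1" "card (?U m) > 0"
        using finU \<open>t \<in> ?U m\<close> by (auto simp: card_gt_0_iff)
      ultimately show ?thesis using IH by simp
    next
      case False
      then have "?U (Suc m) = ?U m" using H' by auto
      moreover have "?K (Suc m) = ?K m" using False by (auto simp: less_Suc_eq)
      ultimately show ?thesis using IH by simp
    qed
  qed
qed

locale team_game =
  fixes ss :: "state list" and team :: "nat set"
  assumes legal: "legal_game ss" and blocked_end: "blocked (last ss)"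
    and team_players: "team \<subseteq> players"
    and alternating: "\<And>k. player_of_turn (Suc k) \<in> team \<longleftrightarrow> player_of_turn k \<notin> team"
begin

abbreviation final :: nat where
  "final \<equiv> length ss - 1"

definition avoided :: "nat set" where
  "avoided = {v. \<exists>q\<in>team. \<forall>t\<in>fst (last ss) q. v \<notin> nums t}"

definition idle :: "nat \<Rightarrow> bool" where
  "idle k \<longleftrightarrow> (player_of_turn k \<in> team \<longrightarrow> \<not> moved ss k)"

lemma last_eq: "last ss = ss ! final" and final_less: "final < length ss"
  using legal by (auto simp: legal_game_def last_conv_nth)

lemma final_board_nonempty: "snd (ss ! final) \<noteq> []"
  using legal last_eq by (simp add: legal_game_def game_over_def)

lemma board_nonempty_pos: "snd (ss ! i) \<noteq> [] \<Longrightarrow> 0 < i"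
  using legal by (cases i) (auto simp: legal_game_def)

lemma unplayable_avoided:
  assumes "q \<in> team" "k \<le> final" "snd (ss ! k) \<noteq> []"
    and unplayable: "\<forall>t\<in>fst (ss ! k) q. \<not> fits t (snd (ss ! k))"
  shows "ends (ss ! k) \<subseteq> avoided"
proof
  fix v assume v: "v \<in> ends (ss ! k)"
  have "v \<notin> nums t" if "t \<in> fst (last ss) q" for t
  proof -
    have "t \<in> fst (ss ! k) q"
      using that game_hand_antimono[OF legal assms(2) final_less] last_eq by auto
    then have "\<not> fits t (snd (ss ! k))" using unplayable by blast
    then show ?thesis using v assms(3) by (auto simp: fits_def ends_def nums_def)
  qed
  then show "v \<in> avoided" using assms(1) unfolding avoided_def by blast
qed

lemma team_nonempty: "team \<noteq> {}"
  using alternating[of 0] by auto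

lemma final_ends_avoided: "ends (ss ! final) \<subseteq> avoided"
proof -
  obtain q where q: "q \<in> team" using team_nonempty by blast
  then have "\<not> can_play (ss ! final) q"
    using blocked_end team_players last_eq by (auto simp: blocked_def)
  then show ?thesis
    using unplayable_avoided[OF q _ final_board_nonempty] by (simp add: can_play_def)
qed

lemma pass_ends_avoided:
  assumes "k < final" "player_of_turn k \<in> team" "\<not> moved ss k"
  shows "ends (ss ! k) \<subseteq> avoided"
proof -
  have "Suc k < length ss" using assms(1) by simp
  then have "snd (ss ! k) \<noteq> [] \<and> \<not> can_play (ss ! k) (player_of_turn k)"
    using assms(3) by (cases rule: game_step_cases[OF legal]) auto
  then show ?thesis
    using unplayable_avoided[OF assms(2)] assms(1) by (simp add: can_play_def)
qed

text \<open>Turns alternate between the teams, so whenever the team did not move in turns \<open>j - 1\<close>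
  and \<open>j\<close>, the ends at turn \<open>j\<close> were shown to a passing team member.\<close>

lemma ends_avoided:
  assumes "0 < j" "j \<le> final" and idle: "j < final \<Longrightarrow> idle j \<and> idle (j - 1)"
  shows "ends (ss ! j) \<subseteq> avoided"
proof (cases "j = final")
  case True
  then show ?thesis using final_ends_avoided by simp
next
  case False
  then have j: "j < final" using assms(2) by simp
  show ?thesis
  proof (cases "player_of_turn j \<in> team")
    case True
    then show ?thesis using pass_ends_avoided[OF j] idle[OF j] by (simp add: idle_def)
  next
    case False
    have Suc: "Suc (j - 1) = j" using assms(1) by simp
    then have team: "player_of_turn (j - 1) \<in> team" using alternating[of "j - 1"] False by simp
    then have "\<not> moved ss (j - 1)" using idle[OF j] by (simp add: idle_def)
    moreover have "Suc (j - 1) < length ss" using j Suc by simp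
    ultimately have "ss ! Suc (j - 1) = ss ! (j - 1)"
      by (cases rule: game_step_cases[OF legal]) auto
    then have "ss ! j = ss ! (j - 1)" using Suc by simp
    then show ?thesis using pass_ends_avoided[OF _ team \<open>\<not> moved ss (j - 1)\<close>] j by simp
  qed
qed

lemma board_avoided:
  assumes "\<forall>k<final. idle k" "e \<in> set (snd (last ss))"
  shows "nums e \<subseteq> avoided"
proof (rule board_values_exposed[OF legal final_less])
  show "e \<in> set (snd (ss ! final))" using assms(2) last_eq by simp
  fix i assume "i \<le> final" "snd (ss ! i) \<noteq> []"
  then show "ends (ss ! i) \<subseteq> avoided"
    using assms(1) board_nonempty_pos by (intro ends_avoided) auto
qed

lemma final_board_tile: obtains T where "T \<in> set (snd (last ss))"
  using final_board_nonempty last_eq by (cases "snd (last ss)") auto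

lemma in_final_board:
  assumes "k < length ss" "e \<in> set (snd (ss ! k))"
  shows "e \<in> set (snd (last ss))"
proof -
  have "k \<le> final" using assms(1) by simp
  then show ?thesis using game_board_mono[OF legal _ final_less] assms(2) last_eq by auto
qed

lemma step_ends_cover:
  assumes "k < final" and before: "snd (ss ! k) \<noteq> [] \<Longrightarrow> ends (ss ! k) \<subseteq> C"
  obtains T where "T \<in> set (snd (last ss))" "ends (ss ! Suc k) \<subseteq> C \<union> nums T"
proof -
  have "Suc k < length ss" using assms(1) by simp
  with legal show thesis
  proof (cases rule: game_step_cases)
    case pass
    obtain T where "T \<in> set (snd (last ss))" by (rule final_board_tile)
    then show thesis using that[of T] before pass by auto
  next
    case (move t t')
    have "ends (ss ! Suc k) \<subseteq> C \<union> nums t'"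
    proof (cases "snd (ss ! k) = []")
      case True
      then show ?thesis using moves_ends_first[OF move(2)] by simp
    next
      case False
      then obtain x y r where "ends (ss ! k) = {y, r}" "ends (ss ! Suc k) = {x, r}" "nums t' = {x, y}"
        using moves_ends[OF move(2)] by blast
      then show ?thesis using before False by auto
    qed
    moreover have "t' \<in> set (snd (last ss))"
      using in_final_board moves_board[OF move(2)] \<open>Suc k < length ss\<close> by blast
    ultimately show thesis using that by blast
  qed
qed

lemma step_ends_meet:
  assumes "k < final" "snd (ss ! k) \<noteq> []" "ends (ss ! Suc k) \<subseteq> C"
  shows "ends (ss ! k) \<inter> C \<noteq> {}"
proof -
  have "Suc k < length ss" using assms(1) by simp
  with legal show ?thesis
  proof (cases rule: game_step_cases)
    case pass
    then show ?thesis using assms(3) by (auto simp: ends_def)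
  next
    case (move t t')
    then show ?thesis using moves_ends[OF move(2) assms(2)] assms(3) by auto
  qed
qed

context
  fixes j0 :: nat
  assumes others_idle: "\<forall>k<final. k \<noteq> j0 \<longrightarrow> idle k"
begin

lemma ends_avoided_off_j0:
  assumes "0 < i" "i \<le> final" "i \<noteq> j0" "i \<noteq> Suc j0"
  shows "ends (ss ! i) \<subseteq> avoided"
  using assms others_idle by (intro ends_avoided) auto

lemma ends_after_move_meet_avoided:
  assumes "j0 < final"
  shows "ends (ss ! Suc j0) \<inter> avoided \<noteq> {}"
proof (cases "Suc j0 = final")
  case True
  then show ?thesis using final_ends_avoided by (auto simp: ends_def)
next
  case False
  then show ?thesis
    using assms game_board_nonempty[OF legal, of "Suc j0"] ends_avoided_off_j0[of "Suc (Suc j0)"]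
    by (intro step_ends_meet) auto
qed

lemma ends_before_move_cover:
  assumes "j0 < final" "snd (ss ! j0) \<noteq> []"
  obtains T where "T \<in> set (snd (last ss))" "ends (ss ! j0) \<subseteq> avoided \<union> nums T"
proof -
  have "0 < j0" using board_nonempty_pos assms(2) by blast
  then have "snd (ss ! (j0 - 1)) \<noteq> [] \<Longrightarrow> ends (ss ! (j0 - 1)) \<subseteq> avoided"
    using board_nonempty_pos[of "j0 - 1"] ends_avoided_off_j0[of "j0 - 1"] assms(1) by simp
  moreover have "j0 - 1 < final" using assms(1) by simp
  ultimately obtain T where "T \<in> set (snd (last ss))" "ends (ss ! Suc (j0 - 1)) \<subseteq> avoided \<union> nums T"
    using step_ends_cover by blast
  then show thesis using that \<open>0 < j0\<close> by simp
qed

text \<open>The single move of the team, at turn \<open>j0\<close>, covers an end \<open>y\<close>, keeps \<open>r\<close> and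
  exposes \<open>x\<close>.  If \<open>r\<close> is avoided, the tile just played covers everything; otherwise
  the next turn shows that \<open>x\<close> is avoided, and the tile played just before covers both ends.\<close>

lemma team_move_ends_cover:
  assumes j0: "j0 < final" "moved ss j0"
  obtains T where "T \<in> set (snd (last ss))"
    "\<forall>i\<in>{j0, Suc j0}. snd (ss ! i) \<noteq> [] \<longrightarrow> ends (ss ! i) \<subseteq> avoided \<union> nums T"
proof -
  have "Suc j0 < length ss" using j0 by simp
  then obtain t t' where move: "moves (ss ! j0) (player_of_turn j0) t t' (ss ! Suc j0)"
    using j0(2) by (cases rule: game_step_cases[OF legal]) auto
  have t': "t' \<in> set (snd (last ss))"
    using in_final_board moves_board[OF move] \<open>Suc j0 < length ss\<close> by blast
  show thesis
  proof (cases "snd (ss ! j0) = []")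
    case True
    then show thesis using that[OF t'] moves_ends_first[OF move] by auto
  next
    case False
    then obtain x y r where xyr: "ends (ss ! j0) = {y, r}" "ends (ss ! Suc j0) = {x, r}" "nums t' = {x, y}"
      using moves_ends[OF move] by blast
    show thesis
    proof (cases "r \<in> avoided")
      case True
      then show thesis using that[OF t'] xyr by auto
    next
      case False
      then have "ends (ss ! Suc j0) \<subseteq> avoided \<union> ends (ss ! j0)"
        using ends_after_move_meet_avoided[OF j0(1)] xyr by auto
      moreover obtain T where "T \<in> set (snd (last ss))" "ends (ss ! j0) \<subseteq> avoided \<union> nums T"
        using ends_before_move_cover[OF j0(1) \<open>snd (ss ! j0) \<noteq> []\<close>] by blast
      ultimately show thesis using that[of T] by auto
    qed
  qed
qed

lemma board_avoided_but_one_tile: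
  obtains T where "T \<in> set (snd (last ss))" "\<forall>e\<in>set (snd (last ss)). nums e \<subseteq> avoided \<union> nums T"
proof (cases "j0 < final \<and> moved ss j0 \<and> player_of_turn j0 \<in> team")
  case False
  then have all_idle: "\<forall>k<final. idle k" using others_idle by (auto simp: idle_def)
  obtain T where T: "T \<in> set (snd (last ss))" by (rule final_board_tile)
  then show thesis using that[of T] board_avoided[OF all_idle] by blast
next
  case True
  then obtain T where T: "T \<in> set (snd (last ss))"
    "\<forall>i\<in>{j0, Suc j0}. snd (ss ! i) \<noteq> [] \<longrightarrow> ends (ss ! i) \<subseteq> avoided \<union> nums T"
    using team_move_ends_cover by blast
  have "nums e \<subseteq> avoided \<union> nums T" if "e \<in> set (snd (last ss))" for e
  proof (rule board_values_exposed[OF legal final_less])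
    show "e \<in> set (snd (ss ! final))" using that last_eq by simp
    fix i assume i: "i \<le> final" "snd (ss ! i) \<noteq> []"
    show "ends (ss ! i) \<subseteq> avoided \<union> nums T"
    proof (cases "i \<in> {j0, Suc j0}")
      case True
      then show ?thesis using T(2) i by blast
    next
      case False
      then show ?thesis using ends_avoided_off_j0[of i] board_nonempty_pos[OF i(2)] i(1) by auto
    qed
  qed
  then show thesis using that T(1) by blast
qed

end

end

section \<open>The winners cannot obtain 108 points\<close>

lemma consistent_off_board:
  "consistent s \<Longrightarrow> (\<Union>p\<in>players. fst s p) = all_tiles - board_tiles (snd s)"
  unfolding consistent_def by blast

lemma tranca_minima_final:
  assumes "tranca_minima ss"
  shows "legal_game ss" "consistent (last ss)" "blocked (last ss)" "snd (last ss) \<noteq> []"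
proof -
  show legal: "legal_game ss" using assms by (simp add: tranca_minima_def)
  then have "ss \<noteq> []" by (simp add: legal_game_def)
  then show "consistent (last ss)"
    using game_consistent[OF legal, of "length ss - 1"] by (simp add: last_conv_nth)
  show "blocked (last ss)" using assms by (simp add: tranca_minima_def ends_in_tranca_def)
  show "snd (last ss) \<noteq> []" using legal by (simp add: legal_game_def game_over_def)
qed

lemma tranca_minima_board:
  assumes tm: "tranca_minima ss"
  defines "B \<equiv> snd (last ss)"
  shows "card (board_tiles B) = 10" "\<forall>y\<le>6. (0, y) \<in> board_tiles B"
    "\<forall>y\<in>{1..6}. (\<Sum>t\<in>board_tiles B. occurrences y t) = 2"
    "(\<Sum>t\<in>board_tiles B. pips t) = 42"
proof -
  note final_state = tranca_minima_final[OF tm]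
  have cons: "board_tiles B \<subseteq> all_tiles" "distinct (map norm_tile B)" "chain B"
    using final_state(2) by (auto simp: consistent_def B_def)
  have pips42: "(\<Sum>e\<leftarrow>B. pips e) = 42"
    using tm by (simp add: tranca_minima_def board_pips_def B_def)
  then show "(\<Sum>t\<in>board_tiles B. pips t) = 42"
    using sum_board_tiles[OF cons(2), of pips] by simp
  have "t \<in> board_tiles B"
    if t: "t \<in> all_tiles" and hit: "nums t \<inter> {left_end B, right_end B} \<noteq> {}" for t
  proof (rule ccontr)
    assume "t \<notin> board_tiles B"
    then have "t \<in> (\<Union>p\<in>players. fst (last ss) p)"
      using t consistent_off_board[OF final_state(2)] by (simp add: B_def)
    then obtain p where "p \<in> players" "t \<in> fst (last ss) p" by blast
    moreover have "\<not> can_play (last ss) p" using final_state(3) \<open>p \<in> players\<close> by (simp add: blocked_def)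
    ultimately show False using hit final_state(4) by (auto simp: can_play_def fits_def nums_def B_def)
  qed
  from exhausted_board_42[OF cons(3) final_state(4)[folded B_def] cons(2,1) this pips42]
  show "card (board_tiles B) = 10" "\<forall>y\<le>6. (0, y) \<in> board_tiles B"
    "\<forall>y\<in>{1..6}. (\<Sum>t\<in>board_tiles B. occurrences y t) = 2" by blast+
qed

locale tranca_split =
  fixes ss :: "state list" and w1 w2 l1 l2 :: nat
  assumes minima: "tranca_minima ss"
    and players_split: "players = {w1, w2, l1, l2}" "distinct [w1, w2, l1, l2]"
    and alternating: "\<And>k. player_of_turn (Suc k) \<in> {l1, l2} \<longleftrightarrow> player_of_turn k \<notin> {l1, l2}"
begin

abbreviation hand :: "nat \<Rightarrow> tile set" where
  "hand \<equiv> fst (last ss)"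

abbreviation BT :: "tile set" where
  "BT \<equiv> board_tiles (snd (last ss))"

abbreviation W :: "tile set" where
  "W \<equiv> hand w1 \<union> hand w2"

lemmas final_state = tranca_minima_final[OF minima]

lemma hands_disjoint: "p \<in> players \<Longrightarrow> q \<in> players \<Longrightarrow> p \<noteq> q \<Longrightarrow> hand p \<inter> hand q = {}"
  using final_state(2) by (simp add: consistent_def)

lemma split_players: "w1 \<in> players" "w2 \<in> players" "l1 \<in> players" "l2 \<in> players"
  using players_split(1) by auto

lemma team_hands_disjoint:
  "hand w1 \<inter> hand w2 = {}" "hand l1 \<inter> hand l2 = {}" "W \<inter> hand l1 = {}" "(W \<union> hand l1) \<inter> hand l2 = {}"
proof -
  note p = split_players
  have "w1 \<noteq> w2" "w1 \<noteq> l1" "w1 \<noteq> l2" "w2 \<noteq> l1" "w2 \<noteq> l2" "l1 \<noteq> l2"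
    using players_split(2) by auto
  then show "hand w1 \<inter> hand w2 = {}" "hand l1 \<inter> hand l2 = {}" "W \<inter> hand l1 = {}"
    "(W \<union> hand l1) \<inter> hand l2 = {}"
    using hands_disjoint[OF p(1,2)] hands_disjoint[OF p(3,4)] hands_disjoint[OF p(1,3)]
      hands_disjoint[OF p(2,3)] hands_disjoint[OF p(1,4)] hands_disjoint[OF p(2,4)] by auto
qed

lemma finite_hands: "finite (hand w1)" "finite (hand w2)" "finite (hand l1)" "finite (hand l2)"
  using finite_hand[OF final_state(2)] players_split(1) by auto

sublocale layout: final_layout BT W "hand l1" "hand l2"
proof
  show "W \<union> hand l1 \<union> hand l2 = all_tiles - BT"
    using consistent_off_board[OF final_state(2)] players_split(1) by auto
qed (use tranca_minima_board[OF minima] final_state(2) in \<open>auto simp: consistent_def\<close>)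

sublocale game: team_game ss "{l1, l2}"
  using final_state(1,3) players_split alternating by unfold_locales auto

lemma card_off_board: "card W + card (hand l1) + card (hand l2) = 18"
proof -
  have "card (all_tiles - BT) = 18"
    using tranca_minima_board(1)[OF minima] layout.board_sub card_all_tiles
    by (simp add: card_Diff_subset layout.finite_board)
  moreover have "card (W \<union> hand l1 \<union> hand l2) = card W + card (hand l1) + card (hand l2)"
    using finite_hands team_hands_disjoint by (simp add: card_Un_disjoint)
  ultimately show ?thesis using layout.off_board by simp
qed

lemma sum_pips_winners: "(\<Sum>t\<in>W. pips t) = hand_pips (last ss) w1 + hand_pips (last ss) w2"
  using sum.union_disjoint[OF finite_hands(1,2) team_hands_disjoint(1)] by (simp add: hand_pips_def)

lemma card_hand_le_7: "p \<in> players \<Longrightarrow> card (hand p) \<le> 7"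
proof -
  assume p: "p \<in> players"
  have "is_deal (fst (ss ! 0))" using final_state(1) by (simp add: legal_game_def)
  then have card7: "card (fst (ss ! 0) p) = 7" using p by (simp add: is_deal_def)
  then have "finite (fst (ss ! 0) p)" by (simp add: card_ge_0_finite)
  moreover have "hand p \<subseteq> fst (ss ! 0) p"
    using game_hand_antimono[OF final_state(1) _ game.final_less, of 0] game.last_eq by simp
  ultimately show ?thesis using card_mono card7 by fastforce
qed

abbreviation losers_moves :: "nat set" where
  "losers_moves \<equiv> {k. k < game.final \<and> moved ss k \<and> player_of_turn k \<in> {l1, l2}}"

lemma card_losers_moves: "card (hand l1) + card (hand l2) + card losers_moves = 14"
proof -
  have "is_deal (fst (ss ! 0))" using final_state(1) by (simp add: legal_game_def)
  moreover have "l1 \<noteq> l2" using players_split(2) by simp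
  ultimately have "card (fst (ss ! 0) l1) = 7" "card (fst (ss ! 0) l2) = 7"
    "fst (ss ! 0) l1 \<inter> fst (ss ! 0) l2 = {}"
    using split_players(3,4) unfolding is_deal_def by blast+
  then have "card (fst (ss ! 0) l1 \<union> fst (ss ! 0) l2) = 14"
    by (subst card_Un_disjoint) (auto intro: card_ge_0_finite)
  moreover have "card (hand l1 \<union> hand l2) = card (hand l1) + card (hand l2)"
    using finite_hands team_hands_disjoint by (simp add: card_Un_disjoint)
  ultimately show ?thesis
    using team_hand_card[OF final_state(1), of "{l1, l2}" game.final] game.final_less game.last_eq
      split_players by simp
qed

lemma avoided_iff_missing:
  "v \<in> {1..6} \<Longrightarrow> v \<in> game.avoided \<longleftrightarrow> v \<in> missing (hand l1) \<union> missing (hand l2)"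
  unfolding game.avoided_def missing_def by auto

lemma number_on_board:
  assumes "v \<le> 6"
  obtains e where "e \<in> set (snd (last ss))" "v \<in> nums e"
proof -
  have "(0, v) \<in> BT" using layout.zero_tiles assms by simp
  then obtain e where e: "e \<in> set (snd (last ss))" "(0, v) = norm_tile e" by (rule imageE)
  have "v \<in> nums (norm_tile e)" unfolding e(2)[symmetric] by simp
  then show thesis using that[OF e(1)] by simp
qed

lemma hand_pips_total:
  "hand_pips (last ss) w1 + hand_pips (last ss) w2 + hand_pips (last ss) l1 + hand_pips (last ss) l2 = 126"
proof -
  have "(\<Sum>t\<in>all_tiles - BT. pips t) = 126"
    using sum.subset_diff[OF layout.board_sub finite_all_tiles, of pips] sum_pips_all_tiles
      tranca_minima_board(4)[OF minima] by simp
  moreover have "(\<Sum>t\<in>W \<union> hand l1 \<union> hand l2. pips t) =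
      (\<Sum>t\<in>W. pips t) + (\<Sum>t\<in>hand l1. pips t) + (\<Sum>t\<in>hand l2. pips t)"
    using finite_hands team_hands_disjoint by (simp add: sum.union_disjoint)
  ultimately show ?thesis
    using layout.off_board sum_pips_winners by (simp add: hand_pips_def)
qed

lemma winners_off_board_nonzero: "\<forall>t\<in>W. fst t \<noteq> 0"
  using layout.off_board_nonzero layout.hands_off_board by blast

lemma idle_off_losers_moves: "k < game.final \<Longrightarrow> k \<notin> losers_moves \<Longrightarrow> game.idle k"
  by (auto simp: game.idle_def)

lemma unmissed_on_board:
  assumes "\<forall>e\<in>set (snd (last ss)). nums e \<subseteq> game.avoided \<union> C"
  shows "{1..6} - (missing (hand l1) \<union> missing (hand l2)) \<subseteq> C"
proof
  fix v assume v: "v \<in> {1..6} - (missing (hand l1) \<union> missing (hand l2))"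
  then obtain e where "e \<in> set (snd (last ss))" "v \<in> nums e"
    using number_on_board[of v] by auto
  then show "v \<in> C" using assms avoided_iff_missing v by blast
qed

text \<open>If the losers never moved, every number on the board was at some time an end they
  passed on, so their two full hands would miss all of \<open>1..6\<close>.\<close>

lemma card_winners_ge_5: "5 \<le> card W"
proof (rule ccontr)
  assume "\<not> 5 \<le> card W"
  then have L7: "card (hand l1) = 7" "card (hand l2) = 7"
    using card_off_board card_hand_le_7[OF split_players(3)] card_hand_le_7[OF split_players(4)]
    by linarith+
  then have "losers_moves = {}" using card_losers_moves by simp
  then have "\<forall>e\<in>set (snd (last ss)). nums e \<subseteq> game.avoided \<union> {}"
    using game.board_avoided idle_off_losers_moves by blast
  then have "{1..6} \<subseteq> missing (hand l1) \<union> missing (hand l2)"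
    using unmissed_on_board by blast
  then show False using layout.losers_7_7_miss_not_all L7 by blast
qed

lemma winners_pips_ne_18: "(\<Sum>t\<in>W. pips t) \<noteq> 18"
proof
  assume pips18: "(\<Sum>t\<in>W. pips t) = 18"
  have "card W = 5"
    using hand_18_pips(1)[OF _ winners_off_board_nonzero pips18] layout.hands_off_board card_winners_ge_5
    by auto
  then obtain x where x: "x \<in> {(1,4), (2,3)}" "W = {(1,1), (1,2), (1,3), (2,2), x}"
    using hand_18_pips(2)[OF _ winners_off_board_nonzero pips18] layout.hands_off_board by blast
  interpret five: five_winner_tiles BT W "hand l1" "hand l2" x
    using x by unfold_locales auto
  have losers13: "card (hand l1) + card (hand l2) = 13"
    using card_off_board \<open>card W = 5\<close> by simp
  then have "card losers_moves = 1" using card_losers_moves by simp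
  then obtain j0 where "losers_moves = {j0}" by (rule card_1_singletonE)
  then have "\<forall>k<game.final. k \<noteq> j0 \<longrightarrow> game.idle k"
    using idle_off_losers_moves by blast
  then obtain T where T: "T \<in> set (snd (last ss))"
    "\<forall>e\<in>set (snd (last ss)). nums e \<subseteq> game.avoided \<union> nums T"
    by (rule game.board_avoided_but_one_tile)
  have "{1..6} - (missing (hand l1) \<union> missing (hand l2)) \<subseteq> nums (norm_tile T)"
    using unmissed_on_board[OF T(2)] by simp
  moreover have "norm_tile T \<in> BT" using T(1) by simp
  moreover have "card (hand l1) = 7 \<and> card (hand l2) = 6 \<or> card (hand l1) = 6 \<and> card (hand l2) = 7"
    using losers13 card_hand_le_7[OF split_players(3)] card_hand_le_7[OF split_players(4)] by linarith
  ultimately show False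
    using five.losers_7_6_miss_not_all_but_one_tile
      five_winner_tiles.losers_7_6_miss_not_all_but_one_tile[OF five.five_winner_tiles_swap]
    by (metis sup_commute)
qed

lemma winners_hand_pips_ne_18: "hand_pips (last ss) w1 + hand_pips (last ss) w2 \<noteq> 18"
  using winners_pips_ne_18 sum_pips_winners by simp

end

lemma player_of_turn_Suc_team:
  "player_of_turn (Suc k) \<in> {1, 3} \<longleftrightarrow> player_of_turn k \<notin> {1, 3}"
  "player_of_turn (Suc k) \<in> {2, 4} \<longleftrightarrow> player_of_turn k \<notin> {2, 4}"
  by (simp_all add: player_of_turn_def) presburger+

theorem mainTheorem9:
  shows "\<not> (\<exists>ss. tranca_minima ss \<and> winner_obtains (last ss) 108)"
proof
  assume "\<exists>ss. tranca_minima ss \<and> winner_obtains (last ss) 108"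
  then obtain ss where minima: "tranca_minima ss" and wins: "winner_obtains (last ss) 108" by blast
  interpret team13_lost: tranca_split ss 2 4 1 3
    using minima player_of_turn_Suc_team(1) by unfold_locales (auto simp: players_def)
  interpret team24_lost: tranca_split ss 1 3 2 4
    using minima player_of_turn_Suc_team(2) by unfold_locales (auto simp: players_def)
  show False
    using wins team13_lost.hand_pips_total team13_lost.winners_hand_pips_ne_18
      team24_lost.winners_hand_pips_ne_18
    unfolding winner_obtains_def team13_pips_def team24_pips_def by linarith
qed

end
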